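(* Neither the VCCR $scwc$ nor the VSCC $\overline{scwc}$ satisfies Coherent IIA.
   Context: Profiles: $\mathbf P:V\to\mathcal L(X)$, $V$ nonempty finite set of voters, $X=X(\mathbf P)$ nonempty finite set of candidates, $\mathcal L(X)$ strict linear orders; $\mathbf P_{|Y}$ restricts each ballot to $Y$. $\mathrm{Margin}_{\mathbf P}(x,y)$ = #voters ranking $x$ above $y$ minus #ranking $y$ above $x$. $\mathcal M(\mathbf P)$: directed graph on $X(\mathbf P)$ with edge $x\to y$ of weight $\mathrm{Margin}_{\mathbf P}(x,y)$ when positive. Majority path: sequence with positive consecutive margins; strength = minimum. $(x,y)\in sc(\mathbf P)$ iff $\mathrm{Margin}_{\mathbf P}(x,y)>0$ exceeds the strength of every majority path from $y$ to $x$; $(x,y)\in wc(\mathbf P)$ iff $\mathrm{Margin}_{\mathbf P}(x,y)>0$ and $\mathrm{Margin}_{\mathbf P}(x,z)\ge\mathrm{Margin}_{\mathbf P}(y,z)$ for all $z$; $scwc(\mathbf P)=sc(\mathbf P)\cup wc(\mathbf P)$; $\overline{scwc}(\mathbf P)$ is the set of candidates not defeated in $scwc(\mathbf P)$. Write $\mathbf P\rightsquigarrow_{x,y}\mathbf P'$ if $\mathbf P_{|\{x,y\}}=\mathbf P'_{|\{x,y\}}$ and $\mathcal M(\mathbf P')$ is obtainable from $\mathcal M(\mathbf P)$ by deleting zero or more candidates other than $x,y$ and deleting or reducing weights of zero or more edges not connecting $x$ and $y$. A VCCR $f$ satisfies Coherent IIA if $(x,y)\in f(\mathbf P)$ and $\mathbf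 P\rightsquigarrow_{x,y}\mathbf P'$ imply $(x,y)\in f(\mathbf P')$. A VSCC $F$ satisfies Coherent IIA if for every $\mathbf P$ and $y\notin F(\mathbf P)$ there is $x\in X(\mathbf P)$ with $y\notin F(\mathbf P')$ for all $\mathbf P'$ with $\mathbf P\rightsquigarrow_{x,y}\mathbf P'$. *)

theory Defs
  imports Main
begin

text \<open>A profile records its voter set V, candidate set X and, for each voter, a ballot
given as a strict relation (a, b) meaning "a is ranked above b".\<close>

record profile =
  voters :: "nat set"
  cands  :: "nat set"
  ballot :: "nat \<Rightarrow> (nat \<times> nat) set"

definition wf_profile :: "profile \<Rightarrow> bool" where
  "wf_profile P \<longleftrightarrow> finite (voters P) \<and> voters P \<noteq> {} \<and>
     finite (cands P) \<and> cands P \<noteq> {} \<and>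
     (\<forall>v \<in> voters P. ballot P v \<subseteq> cands P \<times> cands P \<and>
                      strict_linear_order_on (cands P) (ballot P v))"

definition restrict_profile :: "profile \<Rightarrow> nat set \<Rightarrow> profile" where
  "restrict_profile P Y =
     \<lparr>voters = voters P, cands = cands P \<inter> Y,
      ballot = (\<lambda>v. if v \<in> voters P then ballot P v \<inter> (Y \<times> Y) else {})\<rparr>"

definition margin :: "profile \<Rightarrow> nat \<Rightarrow> nat \<Rightarrow> int" where
  "margin P a b = int (card {v \<in> voters P. (a, b) \<in> ballot P v})
                - int (card {v \<in> voters P. (b, a) \<in> ballot P v})"

definition majority_path :: "profile \<Rightarrow> nat list \<Rightarrow> bool" where
  "majority_path P xs \<longleftrightarrow> length xs \<ge> 2 \<and> set xs \<subseteq> cands P \<and>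
     (\<forall>i. Suc i < length xs \<longrightarrow> margin P (xs ! i) (xs ! Suc i) > 0)"

definition path_strength :: "profile \<Rightarrow> nat list \<Rightarrow> int" where
  "path_strength P xs = Min {margin P (xs ! i) (xs ! Suc i) | i. Suc i < length xs}"

definition sc :: "profile \<Rightarrow> (nat \<times> nat) set" where
  "sc P = {(x, y). x \<in> cands P \<and> y \<in> cands P \<and> margin P x y > 0 \<and>
     (\<forall>xs. majority_path P xs \<and> hd xs = y \<and> last xs = x \<longrightarrow>
            margin P x y > path_strength P xs)}"

definition wc :: "profile \<Rightarrow> (nat \<times> nat) set" where
  "wc P = {(x, y). x \<in> cands P \<and> y \<in> cands P \<and> margin P x y > 0 \<and>
     (\<forall>z \<in> cands P. margin P x z \<ge> margin P y z)}"

definition scwc :: "profile \<Rightarrow> (nat \<times> nat) set" where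
  "scwc P = sc P \<union> wc P"

definition scwc_bar :: "profile \<Rightarrow> nat set" where
  "scwc_bar P = {x \<in> cands P. \<not> (\<exists>y. (y, x) \<in> scwc P)}"

text \<open>M(P') is obtained from M(P) by deleting candidates other than x, y and
deleting / reducing the weight of edges not connecting x and y.\<close>
definition graph_reduct :: "profile \<Rightarrow> nat \<Rightarrow> nat \<Rightarrow> profile \<Rightarrow> bool" where
  "graph_reduct P x y P' \<longleftrightarrow>
     cands P' \<subseteq> cands P \<and>
     (\<forall>c \<in> cands P. c \<notin> cands P' \<longrightarrow> c \<noteq> x \<and> c \<noteq> y) \<and>
     (\<forall>a \<in> cands P'. \<forall>b \<in> cands P'.
        (margin P' a b > 0 \<longrightarrow> margin P a b > 0 \<and> margin P' a b \<le> margin P a b) \<and>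
        ({a, b} = {x, y} \<longrightarrow>
           (margin P' a b > 0 \<longleftrightarrow> margin P a b > 0) \<and>
           (margin P a b > 0 \<longrightarrow> margin P' a b = margin P a b)))"

definition squig :: "profile \<Rightarrow> nat \<Rightarrow> nat \<Rightarrow> profile \<Rightarrow> bool" where
  "squig P x y P' \<longleftrightarrow>
     restrict_profile P {x, y} = restrict_profile P' {x, y} \<and> graph_reduct P x y P'"

definition coherent_IIA_vccr :: "(profile \<Rightarrow> (nat \<times> nat) set) \<Rightarrow> bool" where
  "coherent_IIA_vccr f \<longleftrightarrow>
     (\<forall>P P' x y. wf_profile P \<and> wf_profile P' \<and> (x, y) \<in> f P \<and> squig P x y P'
                 \<longrightarrow> (x, y) \<in> f P')"

definition coherent_IIA_vscc :: "(profile \<Rightarrow> nat set) \<Rightarrow> bool" where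
  "coherent_IIA_vscc F \<longleftrightarrow>
     (\<forall>P y. wf_profile P \<and> y \<notin> F P \<longrightarrow>
        (\<exists>x \<in> cands P. \<forall>P'. wf_profile P' \<and> squig P x y P' \<longrightarrow> y \<notin> F P'))"

end

theory Submission
  imports Defs
begin

text \<open>Take a five-voter profile \<open>P\<close> on candidates 0, 1, 2, 3 in which 0 weakly covers 1: 0 beats 1
  and does at least as well as 1 against everyone, tying with it against 2 (margin 3 each). Let \<open>P'\<close>
  move 0 below 2 in the last ballot. This changes neither any ballot restricted to \<open>{x, 1}\<close> nor any
  margin other than the one between 0 and 2, so \<open>P \<leadsto>\<^sub>x\<^sub>y P'\<close> holds for \<open>y = 1\<close> and every \<open>x\<close>.
  In \<open>P'\<close> the margin of 0 over 2 has dropped to 1, which destroys the weak cover; the only candidates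
  beating 1, namely 0 and 3, do so by 1, and the majority paths 1, 2, 3, 0 and 1, 2, 3 of strength 1
  block a Split Cycle defeat. So 1 is defeated in \<open>P\<close> but undefeated in \<open>P'\<close>.\<close>

lemma margin_restrict_profile:
  assumes "a \<in> Y" "b \<in> Y"
  shows "margin (restrict_profile P Y) a b = margin P a b"
  using assms by (simp add: margin_def restrict_profile_def cong: conj_cong)

lemma margin_eq_if_restrict_profile_eq:
  assumes "restrict_profile P Y = restrict_profile P' Y" "a \<in> Y" "b \<in> Y"
  shows "margin P a b = margin P' a b"
  by (metis assms margin_restrict_profile)

primrec ballot_rel :: "nat list \<Rightarrow> (nat \<times> nat) set" where
  "ballot_rel [] = {}"
| "ballot_rel (c # cs) = {c} \<times> set cs \<union> ballot_rel cs"

lemma ballot_rel_subset: "ballot_rel cs \<subseteq> set cs \<times> set cs"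
  by (induction cs) auto

lemma strict_linear_order_on_ballot_rel:
  "distinct cs \<Longrightarrow> strict_linear_order_on (set cs) (ballot_rel cs)"
proof (induction cs)
  case Nil
  then show ?case by (simp add: strict_linear_order_on_def irrefl_def trans_def)
next
  case (Cons c cs)
  then have c: "c \<notin> set cs" and IH: "strict_linear_order_on (set cs) (ballot_rel cs)"
    by simp_all
  have sub: "ballot_rel cs \<subseteq> set cs \<times> set cs"
    by (rule ballot_rel_subset)
  have "irrefl (ballot_rel (c # cs))"
    using IH c sub by (auto simp: strict_linear_order_on_def irrefl_def)
  moreover have "trans (ballot_rel (c # cs))"
    using IH c sub unfolding strict_linear_order_on_def trans_def by auto
  moreover have "total_on (set (c # cs)) (ballot_rel (c # cs))"
    using IH unfolding strict_linear_order_on_def total_on_def by auto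
  ultimately show ?case
    by (simp add: strict_linear_order_on_def)
qed

lemma ballot_rel_filter: "ballot_rel (filter (\<lambda>c. c \<in> Y) cs) = ballot_rel cs \<inter> Y \<times> Y"
  by (induction cs) auto

text \<open>Ballots are listed from most to least preferred candidate, and the candidates are those of
  the first ballot. The junk ballot \<open>bs ! v\<close> of a non-voter is harmless: margins, well-formedness
  and restrictions only inspect voters.\<close>

definition list_profile :: "nat list list \<Rightarrow> profile" where
  "list_profile bs =
     \<lparr>voters = {..<length bs}, cands = set (hd bs), ballot = (\<lambda>v. ballot_rel (bs ! v))\<rparr>"

lemma wf_list_profile:
  assumes "bs \<noteq> []" "hd bs \<noteq> []" "\<And>b. b \<in> set bs \<Longrightarrow> distinct b \<and> set b = set (hd bs)"
  shows "wf_profile (list_profile bs)"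
proof -
  have "ballot_rel (bs ! v) \<subseteq> set (hd bs) \<times> set (hd bs) \<and>
        strict_linear_order_on (set (hd bs)) (ballot_rel (bs ! v))" if "v < length bs" for v
  proof -
    have "distinct (bs ! v)" "set (bs ! v) = set (hd bs)"
      using assms(3)[OF nth_mem[OF that]] by simp_all
    then show ?thesis
      using ballot_rel_subset[of "bs ! v"] strict_linear_order_on_ballot_rel[of "bs ! v"] by simp
  qed
  then show ?thesis
    using assms(1,2) by (simp add: wf_profile_def list_profile_def lessThan_empty_iff)
qed

lemma margin_list_profile:
  "margin (list_profile bs) a b =
     int (length (filter (\<lambda>r. (a, b) \<in> ballot_rel r) bs))
   - int (length (filter (\<lambda>r. (b, a) \<in> ballot_rel r) bs))"
  by (simp add: margin_def list_profile_def length_filter_conv_card lessThan_def conj_commute)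

lemma restrict_list_profile_eq:
  assumes "map (filter (\<lambda>c. c \<in> Y)) bs = map (filter (\<lambda>c. c \<in> Y)) bs'"
  shows "restrict_profile (list_profile bs) Y = restrict_profile (list_profile bs') Y"
proof -
  have len: "length bs = length bs'"
    using assms map_eq_imp_length_eq by blast
  have same_filter: "filter (\<lambda>c. c \<in> Y) (bs ! v) = filter (\<lambda>c. c \<in> Y) (bs' ! v)"
    if "v < length bs" for v
    using that len nth_map[of v bs] nth_map[of v bs'] assms by metis
  then have "ballot_rel (bs ! v) \<inter> Y \<times> Y = ballot_rel (bs' ! v) \<inter> Y \<times> Y"
    if "v < length bs" for v
    using that by (metis ballot_rel_filter)
  moreover have "set (hd bs) \<inter> Y = set (hd bs') \<inter> Y"
  proof (cases "bs = []")
    case False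
    then show ?thesis
      using same_filter[of 0] len
      by (metis hd_conv_nth inter_set_filter Int_commute length_greater_0_conv)
  qed (use len in simp)
  ultimately show ?thesis
    using len unfolding restrict_profile_def list_profile_def by (simp add: fun_eq_iff)
qed

lemma successively_nth:
  "successively R xs \<Longrightarrow> Suc i < length xs \<Longrightarrow> R (xs ! i) (xs ! Suc i)"
  by (induction R xs arbitrary: i rule: successively.induct) (auto simp: less_Suc_eq_0_disj)

lemma not_sc_if_strong_path:
  assumes "length xs \<ge> 2" "set xs \<subseteq> cands P" "hd xs = y" "last xs = x"
    and "successively (\<lambda>a b. margin P x y \<le> margin P a b) xs"
  shows "(x, y) \<notin> sc P"
proof
  assume xy: "(x, y) \<in> sc P"
  then have pos: "margin P x y > 0" by (simp add: sc_def)
  have edges: "margin P x y \<le> margin P (xs ! i) (xs ! Suc i)" if "Suc i < length xs" for i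
    using successively_nth[OF assms(5) that] .
  have "majority_path P xs"
    using assms(1,2) edges pos unfolding majority_path_def by fastforce
  moreover have "margin P x y \<le> path_strength P xs"
    unfolding path_strength_def
  proof (subst Min_ge_iff)
    show "finite {margin P (xs ! i) (xs ! Suc i) |i. Suc i < length xs}"
      by (rule finite_image_set, rule finite_subset[of _ "{..<length xs}"]) auto
  qed (use assms(1) edges in \<open>auto intro!: exI[of _ 0]\<close>)
  ultimately show False
    using xy assms(3,4) by (auto simp: sc_def)
qed

lemma not_coherent_IIA_vsccI:
  assumes "wf_profile P" "y \<notin> F P" "wf_profile P'"
    and "\<And>x. x \<in> cands P \<Longrightarrow> squig P x y P'" "y \<in> F P'"
  shows "\<not> coherent_IIA_vscc F"
  using assms unfolding coherent_IIA_vscc_def by blast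

definition P_orig :: profile where
  "P_orig = list_profile [[0, 1, 2, 3], [0, 1, 2, 3], [2, 3, 0, 1], [3, 1, 0, 2], [3, 1, 0, 2]]"

definition P_swapped :: profile where
  "P_swapped = list_profile [[0, 1, 2, 3], [0, 1, 2, 3], [2, 3, 0, 1], [3, 1, 0, 2], [3, 1, 2, 0]]"

lemma wf_profile_P_orig: "wf_profile P_orig"
  unfolding P_orig_def by (rule wf_list_profile) auto

lemma wf_profile_P_swapped: "wf_profile P_swapped"
  unfolding P_swapped_def by (rule wf_list_profile) auto

lemma cands_P_orig: "cands P_orig = {0, 1, 2, 3}"
  by (simp add: P_orig_def list_profile_def)

lemma cands_P_swapped: "cands P_swapped = {0, 1, 2, 3}"
  by (simp add: P_swapped_def list_profile_def)

lemma wc_P_orig: "(0, 1) \<in> wc P_orig"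
  by (simp add: wc_def cands_P_orig) (simp add: P_orig_def margin_list_profile)

lemma margin_P_swapped_le_P_orig:
  assumes "a \<in> cands P_swapped" "b \<in> cands P_swapped" "margin P_swapped a b > 0"
  shows "margin P_orig a b > 0 \<and> margin P_swapped a b \<le> margin P_orig a b"
proof -
  have "a \<in> {0, 1, 2, 3}" "b \<in> {0, 1, 2, 3}"
    using assms(1,2) by (simp_all add: cands_P_swapped)
  then show ?thesis
    using assms(3) unfolding P_orig_def P_swapped_def margin_list_profile
    by (elim insertE emptyE) simp_all
qed

lemma squig_P_orig_P_swapped:
  assumes "x \<in> cands P_orig"
  shows "squig P_orig x 1 P_swapped"
proof -
  have "x = 0 \<or> x = 1 \<or> x = 2 \<or> x = 3"
    using assms by (simp add: cands_P_orig)
  then have restrict_eq: "restrict_profile P_orig {x, 1} = restrict_profile P_swapped {x, 1}"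
    unfolding P_orig_def P_swapped_def by (elim disjE) (auto intro: restrict_list_profile_eq)
  have "graph_reduct P_orig x 1 P_swapped"
    unfolding graph_reduct_def
  proof (intro conjI ballI)
    fix a b
    assume "a \<in> cands P_swapped" "b \<in> cands P_swapped"
    then show "margin P_swapped a b > 0 \<longrightarrow>
        margin P_orig a b > 0 \<and> margin P_swapped a b \<le> margin P_orig a b"
      using margin_P_swapped_le_P_orig by blast
    have "margin P_swapped a b = margin P_orig a b" if "{a, b} = {x, 1}"
    proof -
      have "a \<in> {x, 1}" "b \<in> {x, 1}"
        using that by blast+
      then show ?thesis
        using margin_eq_if_restrict_profile_eq[OF restrict_eq] by metis
    qed
    then show "{a, b} = {x, 1} \<longrightarrow> (margin P_swapped a b > 0 \<longleftrightarrow> margin P_orig a b > 0) \<and>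
        (margin P_orig a b > 0 \<longrightarrow> margin P_swapped a b = margin P_orig a b)"
      by simp
  qed (simp_all add: cands_P_orig cands_P_swapped)
  with restrict_eq show ?thesis
    by (simp add: squig_def)
qed

lemma undefeated_P_swapped: "1 \<in> scwc_bar P_swapped"
proof -
  have "(0, 1) \<notin> sc P_swapped"
    by (rule not_sc_if_strong_path[where xs = "[1, 2, 3, 0]"])
       (simp_all add: cands_P_swapped, simp_all add: P_swapped_def margin_list_profile)
  moreover have "(3, 1) \<notin> sc P_swapped"
    by (rule not_sc_if_strong_path[where xs = "[1, 2, 3]"])
       (simp_all add: cands_P_swapped, simp_all add: P_swapped_def margin_list_profile)
  moreover have "(0, 1) \<notin> wc P_swapped" "(3, 1) \<notin> wc P_swapped"
    by (simp_all add: wc_def cands_P_swapped, simp_all add: P_swapped_def margin_list_profile)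
  ultimately have not_defeats: "(x, 1) \<notin> scwc P_swapped" if "x \<in> {0, 3}" for x
    using that by (auto simp: scwc_def)
  have "(x, 1) \<notin> scwc P_swapped" for x
  proof -
    consider "x \<in> {0, 3}" | "x \<in> {1, 2}" | "x \<notin> {0, 1, 2, 3}"
      by blast
    then show ?thesis
    proof cases
      case 1
      then show ?thesis
        by (rule not_defeats)
    next
      case 2
      then have "margin P_swapped x 1 \<le> 0"
        by (auto simp: P_swapped_def margin_list_profile)
      then show ?thesis
        by (simp add: scwc_def sc_def wc_def)
    next
      case 3
      then show ?thesis
        by (simp add: scwc_def sc_def wc_def cands_P_swapped)
    qed
  qed
  then show ?thesis
    by (simp add: scwc_bar_def cands_P_swapped)
qed

theorem proposition8p4:
  shows "\<not> coherent_IIA_vccr scwc \<and> \<not> coherent_IIA_vscc scwc_bar"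
proof
  have defeated: "(0, 1) \<in> scwc P_orig"
    using wc_P_orig by (simp add: scwc_def)
  have "(0, 1) \<notin> scwc P_swapped"
    using undefeated_P_swapped by (simp add: scwc_bar_def)
  then show "\<not> coherent_IIA_vccr scwc"
    using defeated wf_profile_P_orig wf_profile_P_swapped squig_P_orig_P_swapped[of 0]
    unfolding coherent_IIA_vccr_def by (auto simp: cands_P_orig)
  have "1 \<notin> scwc_bar P_orig"
    using defeated by (auto simp: scwc_bar_def)
  then show "\<not> coherent_IIA_vscc scwc_bar"
    using wf_profile_P_orig wf_profile_P_swapped squig_P_orig_P_swapped undefeated_P_swapped
    by (meson not_coherent_IIA_vsccI)
qed

end
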